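(* For all $V\in L^1_{\rm loc}(\Omega,\mathbb R_+)\setminus\{0\}$, all $p,r\in(1,\infty)$ with $p\ne r$, and all $B\in\mathcal A_r(\Omega)$, there exist $b=b(p,r,B,V),\,c=c(p,r,B,V)\in L^\infty(\Omega;\mathbb C^d)$ such that $(A,b,c,V)\in\mathcal S_p(\Omega)$ for all $A\in\mathcal A_p(\Omega)$, while $(B,b,c,V)\notin\mathcal S_r(\Omega)$. In particular, for all $V\in L^1_{\rm loc}(\Omega,\mathbb R_+)\setminus\{0\}$, $p,r\in(1,\infty)$ with $p\ne r$, and $A\in\mathcal A_p(\Omega)\cap\mathcal A_r(\Omega)$, there exist $b,c\in L^\infty(\Omega;\mathbb C^d)$ such that $(A,b,c,V)\in\mathcal S_p(\Omega)\setminus\mathcal S_r(\Omega)$.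
   Context: $\Omega\subseteq\mathbb R^d$ nonempty open; $\langle \xi,\sigma\rangle=\sum_j\xi_j\overline{\sigma_j}$. $\mathcal{A}(\Omega)$: measurable $A:\Omega\to\mathbb{C}^{d\times d}$ with $\lambda,\Lambda>0$ such that $\Re\langle A(x)\xi,\xi\rangle\ge\lambda|\xi|^2$, $|\langle A(x)\xi,\sigma\rangle|\le\Lambda|\xi||\sigma|$ a.e. $\mathcal{J}_s\xi=\frac s2(\xi+(1-\frac2s)\overline\xi)$. $\Delta_s(A)=\operatorname{ess\,inf}_{x}\min_{|\xi|=1}\Re\langle A(x)\xi,\xi+|1-2/s|\overline\xi\rangle$, $\mathcal A_s(\Omega)=\{A\in\mathcal A(\Omega):\Delta_s(A)>0\}$. $\Gamma_s^{(A,b,c,V)}(x,\xi)=\Re\langle A(x)\xi,\mathcal J_s\xi\rangle+\Re\langle b(x)+\mathcal J_sc(x),\xi\rangle+V(x)$. $\mathcal S_s(\Omega)$: quadruples $(A,b,c,V)$ ($A\in\mathcal A(\Omega)$, $b,c\in L^\infty(\Omega;\mathbb C^d)$, $0\le V\in L^1_{\rm loc}$) with $A\in\mathcal A_s(\Omega)$, $|b-c|\le M\sqrt V$ a.e. for some $M>0$, and $\Gamma_s(x,\xi)\ge\mu(|\xi|^2+V(x))$ for a.e. $x$, all $\xi$, for some $\mu>0$. *)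

theory Defs
  imports "HOL-Analysis.Analysis"
begin

text \<open>Points of Omega live in real^'n (d = CARD('n)); vectors xi live in complex^'n,
  matrices A(x) in complex^'n^'n.\<close>

definition cinner :: "complex^'n \<Rightarrow> complex^'n \<Rightarrow> complex" where
  "cinner \<xi> \<sigma> = (\<Sum>j\<in>UNIV. \<xi>$j * cnj (\<sigma>$j))"

definition vconj :: "complex^'n \<Rightarrow> complex^'n" where
  "vconj \<xi> = (\<chi> j. cnj (\<xi>$j))"

definition Jop :: "real \<Rightarrow> complex^'n \<Rightarrow> complex^'n" where
  "Jop s \<xi> = (s/2) *\<^sub>R (\<xi> + (1 - 2/s) *\<^sub>R vconj \<xi>)"

definition Linf :: "(real^'n) set \<Rightarrow> (real^'n \<Rightarrow> complex^'n) \<Rightarrow> bool" where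
  "Linf \<Omega> b \<longleftrightarrow> b \<in> borel_measurable (lebesgue_on \<Omega>) \<and>
     (\<exists>C. AE x in lebesgue_on \<Omega>. norm (b x) \<le> C)"

definition L1loc_nonneg :: "(real^'n) set \<Rightarrow> (real^'n \<Rightarrow> real) \<Rightarrow> bool" where
  "L1loc_nonneg \<Omega> V \<longleftrightarrow> V \<in> borel_measurable (lebesgue_on \<Omega>) \<and>
     (AE x in lebesgue_on \<Omega>. 0 \<le> V x) \<and>
     (\<forall>K. compact K \<and> K \<subseteq> \<Omega> \<longrightarrow> integrable (lebesgue_on K) V)"

definition ellA :: "(real^'n) set \<Rightarrow> (real^'n \<Rightarrow> complex^'n^'n) \<Rightarrow> bool" where
  "ellA \<Omega> A \<longleftrightarrow> A \<in> borel_measurable (lebesgue_on \<Omega>) \<and>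
     (\<exists>lam>0. \<exists>Lam>0. AE x in lebesgue_on \<Omega>.
        (\<forall>\<xi>. Re (cinner (A x *v \<xi>) \<xi>) \<ge> lam * (norm \<xi>)\<^sup>2) \<and>
        (\<forall>\<xi> \<sigma>. cmod (cinner (A x *v \<xi>) \<sigma>) \<le> Lam * norm \<xi> * norm \<sigma>))"

text \<open>A_s(Omega): Delta_s(A) > 0, where Delta_s(A) is the essential infimum over x of
  the minimum over unit xi. Delta_s(A) > 0 is written out as: there is delta > 0 bounding
  the quantity from below for a.e. x and all unit xi.\<close>
definition ellA_s :: "(real^'n) set \<Rightarrow> real \<Rightarrow> (real^'n \<Rightarrow> complex^'n^'n) \<Rightarrow> bool" where
  "ellA_s \<Omega> s A \<longleftrightarrow> ellA \<Omega> A \<and>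
     (\<exists>\<delta>>0. AE x in lebesgue_on \<Omega>. \<forall>\<xi>. norm \<xi> = 1 \<longrightarrow>
        Re (cinner (A x *v \<xi>) (\<xi> + \<bar>1 - 2/s\<bar> *\<^sub>R vconj \<xi>)) \<ge> \<delta>)"

definition Gamma :: "real \<Rightarrow> (real^'n \<Rightarrow> complex^'n^'n) \<Rightarrow> (real^'n \<Rightarrow> complex^'n)
    \<Rightarrow> (real^'n \<Rightarrow> complex^'n) \<Rightarrow> (real^'n \<Rightarrow> real) \<Rightarrow> real^'n \<Rightarrow> complex^'n \<Rightarrow> real" where
  "Gamma s A b c V x \<xi> = Re (cinner (A x *v \<xi>) (Jop s \<xi>))
      + Re (cinner (b x + Jop s (c x)) \<xi>) + V x"

definition classS :: "(real^'n) set \<Rightarrow> real \<Rightarrow> (real^'n \<Rightarrow> complex^'n^'n) \<Rightarrow> (real^'n \<Rightarrow> complex^'n)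
    \<Rightarrow> (real^'n \<Rightarrow> complex^'n) \<Rightarrow> (real^'n \<Rightarrow> real) \<Rightarrow> bool" where
  "classS \<Omega> s A b c V \<longleftrightarrow> ellA \<Omega> A \<and> Linf \<Omega> b \<and> Linf \<Omega> c \<and> L1loc_nonneg \<Omega> V \<and>
     ellA_s \<Omega> s A \<and>
     (\<exists>M>0. AE x in lebesgue_on \<Omega>. norm (b x - c x) \<le> M * sqrt (V x)) \<and>
     (\<exists>\<mu>>0. AE x in lebesgue_on \<Omega>. \<forall>\<xi>. Gamma s A b c V x \<xi> \<ge> \<mu> * ((norm \<xi>)\<^sup>2 + V x))"

end

theory Submission
  imports Defs
begin

(* Fix a coordinate vector e, which is real, so that J_s e = (s - 1) e. Put c = f e and
   b = (1 - p) c, where f = kappa sqrt V on a level set {0 < V <= N} of positive measure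
   and f = 0 elsewhere. Then b + J_s c = (s - p) c. For s = p the first-order part of
   Gamma_p vanishes, so Gamma_p = Re<A xi, J_p xi> + V, which is coercive for every A in
   A_p(Omega): testing Delta_p(A) > 0 on i xi flips the sign of the conjugate term, so the
   bound with |1 - 2/p| also holds with 1 - 2/p. For s = r the drift (r - p) c survives,
   and for kappa of suitable sign and size Gamma_r(x, sqrt(V x) e) <= -V x < 0 on the
   level set, so (B,b,c,V) is not in S_r(Omega). *)

lemma scaleR_eq_smult_of_real: "a *\<^sub>R (x :: complex^'n) = of_real a *s x"
  unfolding vec_eq_iff by simp (simp add: scaleR_conv_of_real)

lemma cinner_add_right: "cinner x (y + z) = cinner x y + cinner x z"
  by (simp add: cinner_def distrib_left sum.distrib)

lemma cinner_diff_right: "cinner x (y - z) = cinner x y - cinner x z"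
  by (simp add: cinner_def right_diff_distrib sum_subtractf)

lemma cinner_smult_left: "cinner (c *s x) y = c * cinner x y"
  by (simp add: cinner_def sum_distrib_left mult.assoc)

lemma cinner_smult_right: "cinner x (c *s y) = cnj c * cinner x y"
  by (simp add: cinner_def sum_distrib_left algebra_simps)

lemma cinner_scaleR_left: "cinner (a *\<^sub>R x) y = of_real a * cinner x y"
  by (simp add: scaleR_eq_smult_of_real cinner_smult_left)

lemma cinner_scaleR_right: "cinner x (a *\<^sub>R y) = of_real a * cinner x y"
  by (simp add: scaleR_eq_smult_of_real cinner_smult_right)

lemma cinner_zero_left [simp]: "cinner 0 y = 0"
  by (simp add: cinner_def)

lemma cinner_self: "cinner x x = of_real ((norm x)\<^sup>2)"
  by (simp add: cinner_def norm_vec_def L2_set_def sum_nonneg flip: complex_norm_square)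

lemma vconj_smult: "vconj (c *s x) = cnj c *s vconj x"
  by (simp add: vconj_def vec_eq_iff)

lemma vconj_scaleR: "vconj (a *\<^sub>R x) = a *\<^sub>R vconj x"
  by (simp add: scaleR_eq_smult_of_real vconj_smult)

lemma vconj_axis_1 [simp]: "vconj (axis i (1::complex)) = axis i 1"
  by (simp add: vconj_def axis_def vec_eq_iff)

lemma norm_axis_1_complex [simp]: "norm (axis i (1::complex)) = 1"
  by (simp add: norm_vec_def L2_set_def axis_def if_distrib[of "\<lambda>z. (cmod z)\<^sup>2"] cong: if_cong)

lemma norm_smult: "norm (c *s (x :: complex^'n)) = cmod c * norm x"
  by (simp add: norm_vec_def L2_set_def norm_mult power_mult_distrib
      sum_distrib_left[symmetric] real_sqrt_mult)

lemma cinner_conj_form_scaleR: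
  "cinner (M *v (a *\<^sub>R \<xi>)) (a *\<^sub>R \<xi> + \<kappa> *\<^sub>R vconj (a *\<^sub>R \<xi>))
     = of_real (a\<^sup>2) * cinner (M *v \<xi>) (\<xi> + \<kappa> *\<^sub>R vconj \<xi>)"
  by (simp add: scaleR_eq_smult_of_real vconj_smult vector_scalar_commute cinner_add_right
      cinner_smult_left cinner_smult_right algebra_simps power2_eq_square)

lemma cinner_conj_form_smult_ii:
  "cinner (M *v (\<i> *s \<xi>)) (\<i> *s \<xi> + \<kappa> *\<^sub>R vconj (\<i> *s \<xi>))
     = cinner (M *v \<xi>) (\<xi> + (- \<kappa>) *\<^sub>R vconj \<xi>)"
  by (simp add: scaleR_eq_smult_of_real vconj_smult vector_scalar_commute cinner_add_right
      cinner_diff_right cinner_smult_left cinner_smult_right vector_smult_assoc algebra_simps)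

lemma cinner_conj_form_lower_bound:
  assumes unit: "\<forall>\<xi>. norm \<xi> = 1 \<longrightarrow> \<delta> \<le> Re (cinner (M *v \<xi>) (\<xi> + \<bar>\<kappa>\<bar> *\<^sub>R vconj \<xi>))"
  shows "\<delta> * (norm \<xi>)\<^sup>2 \<le> Re (cinner (M *v \<xi>) (\<xi> + \<kappa> *\<^sub>R vconj \<xi>))"
proof (cases "\<xi> = 0")
  case True
  then show ?thesis by simp
next
  case False
  define u where "u = (1 / norm \<xi>) *\<^sub>R \<xi>"
  have norm_u: "norm u = 1" and \<xi>_eq: "\<xi> = norm \<xi> *\<^sub>R u"
    using False by (simp_all add: u_def)
  have "\<delta> \<le> Re (cinner (M *v u) (u + \<kappa> *\<^sub>R vconj u))"
  proof (cases "0 \<le> \<kappa>")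
    case True
    then show ?thesis using unit norm_u by simp
  next
    case False
    have "norm (\<i> *s u) = 1" using norm_u by (simp add: norm_smult)
    then have "\<delta> \<le> Re (cinner (M *v (\<i> *s u)) (\<i> *s u + \<bar>\<kappa>\<bar> *\<^sub>R vconj (\<i> *s u)))"
      using unit by blast
    moreover have "\<bar>\<kappa>\<bar> = - \<kappa>" using False by simp
    ultimately show ?thesis by (simp only: cinner_conj_form_smult_ii minus_minus)
  qed
  then have "\<delta> * (norm \<xi>)\<^sup>2 \<le> (norm \<xi>)\<^sup>2 * Re (cinner (M *v u) (u + \<kappa> *\<^sub>R vconj u))"
    by (metis mult.commute mult_left_mono zero_le_power2)
  also have "\<dots> = Re (cinner (M *v \<xi>) (\<xi> + \<kappa> *\<^sub>R vconj \<xi>))"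
    by (subst (2 3 4) \<xi>_eq) (simp add: cinner_conj_form_scaleR)
  finally show ?thesis .
qed

lemma cinner_Jop_right:
  "cinner \<eta> (Jop s \<xi>) = of_real (s / 2) * cinner \<eta> (\<xi> + (1 - 2 / s) *\<^sub>R vconj \<xi>)"
  by (simp add: Jop_def cinner_scaleR_right)

lemma Jop_real:
  assumes "vconj \<xi> = \<xi>" and "s \<noteq> 0"
  shows "Jop s \<xi> = (s - 1) *\<^sub>R \<xi>"
proof -
  have "Jop s \<xi> = (s / 2) *\<^sub>R \<xi> + (s / 2 * (1 - 2 / s)) *\<^sub>R \<xi>"
    by (simp add: Jop_def assms(1) scaleR_add_right)
  also have "\<dots> = (s / 2 + s / 2 * (1 - 2 / s)) *\<^sub>R \<xi>"
    by (rule scaleR_add_left[symmetric])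
  also have "s / 2 + s / 2 * (1 - 2 / s) = s - 1"
    using assms(2) by (simp add: field_simps)
  finally show ?thesis .
qed

lemma ellA_s_Jop_coercive:
  assumes "ellA_s \<Omega> s A" and "0 < s"
  shows "\<exists>d>0. AE x in lebesgue_on \<Omega>. \<forall>\<xi>. d * (norm \<xi>)\<^sup>2 \<le> Re (cinner (A x *v \<xi>) (Jop s \<xi>))"
proof -
  obtain \<delta> where "\<delta> > 0" and unit: "AE x in lebesgue_on \<Omega>. \<forall>\<xi>. norm \<xi> = 1 \<longrightarrow>
      \<delta> \<le> Re (cinner (A x *v \<xi>) (\<xi> + \<bar>1 - 2 / s\<bar> *\<^sub>R vconj \<xi>))"
    using assms(1) unfolding ellA_s_def by blast
  have "AE x in lebesgue_on \<Omega>. \<forall>\<xi>. s / 2 * \<delta> * (norm \<xi>)\<^sup>2 \<le> Re (cinner (A x *v \<xi>) (Jop s \<xi>))"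
    using unit
  proof (eventually_elim, intro allI)
    fix x \<xi>
    assume "\<forall>\<xi>. norm \<xi> = 1 \<longrightarrow>
      \<delta> \<le> Re (cinner (A x *v \<xi>) (\<xi> + \<bar>1 - 2 / s\<bar> *\<^sub>R vconj \<xi>))"
    then have "\<delta> * (norm \<xi>)\<^sup>2 \<le> Re (cinner (A x *v \<xi>) (\<xi> + (1 - 2 / s) *\<^sub>R vconj \<xi>))"
      by (rule cinner_conj_form_lower_bound)
    then show "s / 2 * \<delta> * (norm \<xi>)\<^sup>2 \<le> Re (cinner (A x *v \<xi>) (Jop s \<xi>))"
      using \<open>0 < s\<close> by (simp add: cinner_Jop_right mult.assoc mult_left_mono)
  qed
  then show ?thesis
    using \<open>\<delta> > 0\<close> \<open>0 < s\<close> by (intro exI[of _ "s / 2 * \<delta>"]) simp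
qed

lemma classS_if_drift_cancels:
  fixes A :: "real^'n \<Rightarrow> complex^'n^'n"
  assumes A: "ellA_s \<Omega> s A" and "0 < s"
    and "Linf \<Omega> b" and "Linf \<Omega> c" and V: "L1loc_nonneg \<Omega> V"
    and "\<exists>M>0. AE x in lebesgue_on \<Omega>. norm (b x - c x) \<le> M * sqrt (V x)"
    and cancel: "AE x in lebesgue_on \<Omega>. b x + Jop s (c x) = 0"
  shows "classS \<Omega> s A b c V"
proof -
  obtain d where "d > 0" and coercive: "AE x in lebesgue_on \<Omega>.
      \<forall>\<xi>. d * (norm \<xi>)\<^sup>2 \<le> Re (cinner (A x *v \<xi>) (Jop s \<xi>))"
    using ellA_s_Jop_coercive[OF A \<open>0 < s\<close>] by blast
  have "AE x in lebesgue_on \<Omega>. 0 \<le> V x"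
    using V by (simp add: L1loc_nonneg_def)
  then have "AE x in lebesgue_on \<Omega>. \<forall>\<xi>. min d 1 * ((norm \<xi>)\<^sup>2 + V x) \<le> Gamma s A b c V x \<xi>"
    using coercive cancel
  proof (eventually_elim, intro allI)
    fix x and \<xi> :: "complex^'n"
    assume "0 \<le> V x" and "\<forall>\<xi>. d * (norm \<xi>)\<^sup>2 \<le> Re (cinner (A x *v \<xi>) (Jop s \<xi>))"
      and "b x + Jop s (c x) = 0"
    moreover have "min d 1 * (norm \<xi>)\<^sup>2 \<le> d * (norm \<xi>)\<^sup>2"
      by (simp add: mult_right_mono)
    moreover have "min d 1 * V x \<le> V x"
      using \<open>0 \<le> V x\<close> \<open>d > 0\<close> by (intro mult_left_le_one_le) auto
    moreover have "Gamma s A b c V x \<xi> = Re (cinner (A x *v \<xi>) (Jop s \<xi>)) + V x"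
      using \<open>b x + Jop s (c x) = 0\<close> by (simp add: Defs.Gamma_def)
    ultimately show "min d 1 * ((norm \<xi>)\<^sup>2 + V x) \<le> Gamma s A b c V x \<xi>"
      by (smt (verit) distrib_left)
  qed
  moreover have "ellA \<Omega> A"
    using A by (simp add: ellA_s_def)
  moreover have "min d 1 > 0"
    using \<open>d > 0\<close> by simp
  ultimately show ?thesis
    unfolding classS_def using assms by blast
qed

lemma classS_Gamma_nonneg:
  assumes "classS \<Omega> s A b c V"
  shows "AE x in lebesgue_on \<Omega>. \<forall>\<xi>. 0 \<le> Gamma s A b c V x \<xi>"
proof -
  obtain \<mu> where "\<mu> > 0" and lower: "AE x in lebesgue_on \<Omega>.
      \<forall>\<xi>. \<mu> * ((norm \<xi>)\<^sup>2 + V x) \<le> Gamma s A b c V x \<xi>"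
    using assms unfolding classS_def by blast
  have "AE x in lebesgue_on \<Omega>. 0 \<le> V x"
    using assms by (simp add: classS_def L1loc_nonneg_def)
  then show ?thesis
    using lower
  proof (eventually_elim, intro allI)
    fix x \<xi>
    assume "0 \<le> V x" and "\<forall>\<xi>. \<mu> * ((norm \<xi>)\<^sup>2 + V x) \<le> Gamma s A b c V x \<xi>"
    then show "0 \<le> Gamma s A b c V x \<xi>"
      using \<open>\<mu> > 0\<close> by (meson add_nonneg_nonneg mult_nonneg_nonneg order.trans less_imp_le zero_le_power2)
  qed
qed

lemma Linf_scaleR_const:
  assumes "f \<in> borel_measurable (lebesgue_on \<Omega>)" and "AE x in lebesgue_on \<Omega>. \<bar>f x\<bar> \<le> C"
  shows "Linf \<Omega> (\<lambda>x. f x *\<^sub>R e)"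
proof -
  have "AE x in lebesgue_on \<Omega>. norm (f x *\<^sub>R e) \<le> C * norm e"
    using assms(2) by eventually_elim (simp add: mult_right_mono)
  moreover have "(\<lambda>x. f x *\<^sub>R e) \<in> borel_measurable (lebesgue_on \<Omega>)"
    using assms(1) by measurable
  ultimately show ?thesis
    unfolding Linf_def by blast
qed

lemma Linf_scaleR:
  assumes "Linf \<Omega> c"
  shows "Linf \<Omega> (\<lambda>x. a *\<^sub>R c x)"
proof -
  obtain C where "AE x in lebesgue_on \<Omega>. norm (c x) \<le> C"
    and [measurable]: "c \<in> borel_measurable (lebesgue_on \<Omega>)"
    using assms unfolding Linf_def by blast
  then have "AE x in lebesgue_on \<Omega>. norm (a *\<^sub>R c x) \<le> \<bar>a\<bar> * C"
    by (auto elim!: eventually_mono intro: mult_left_mono)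
  moreover have "(\<lambda>x. a *\<^sub>R c x) \<in> borel_measurable (lebesgue_on \<Omega>)"
    by measurable
  ultimately show ?thesis
    unfolding Linf_def by blast
qed

lemma exists_bounded_level_not_null:
  fixes V :: "'a \<Rightarrow> real"
  assumes "AE x in M. 0 \<le> V x" and "\<not> (AE x in M. V x = 0)"
  shows "\<exists>N::nat. \<not> (AE x in M. \<not> (0 < V x \<and> V x \<le> real N))"
proof (rule ccontr)
  assume "\<not> ?thesis"
  then have "\<forall>N::nat. AE x in M. \<not> (0 < V x \<and> V x \<le> real N)"
    by blast
  then have "AE x in M. \<forall>N::nat. \<not> (0 < V x \<and> V x \<le> real N)"
    by (rule AE_all_countable[THEN iffD2])
  then have "AE x in M. V x = 0"
    using assms(1) by eventually_elim (use real_arch_simple in force)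
  with assms(2) show False by blast
qed

lemma Gamma_along_real_vector:
  assumes "vconj e = e" and "r \<noteq> 0" and "b x + Jop r (c x) = \<beta> *\<^sub>R e"
  shows "Gamma r B b c V x (a *\<^sub>R e)
    = a\<^sup>2 * (r - 1) * Re (cinner (B x *v e) e) + \<beta> * a * (norm e)\<^sup>2 + V x"
proof -
  have "Jop r (a *\<^sub>R e) = (a * (r - 1)) *\<^sub>R e"
    using Jop_real[of "a *\<^sub>R e" r] assms(1,2) by (simp add: vconj_scaleR)
  moreover have "B x *v (a *\<^sub>R e) = a *\<^sub>R (B x *v e)"
    by (simp add: scaleR_eq_smult_of_real vector_scalar_commute)
  ultimately show ?thesis
    using assms(3) by (simp add: Defs.Gamma_def cinner_scaleR_left cinner_scaleR_right cinner_self
        power2_eq_square)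
qed

lemma Gamma_negative_along_real_vector:
  assumes "vconj e = e" and "norm e = 1" and "r \<noteq> 0" and "0 < V x"
    and bounded: "\<forall>\<xi> \<sigma>. cmod (cinner (B x *v \<xi>) \<sigma>) \<le> \<Lambda> * norm \<xi> * norm \<sigma>"
    and drift: "b x + Jop r (c x) = (- (\<Lambda> * \<bar>r - 1\<bar> + 2) * sqrt (V x)) *\<^sub>R e"
  shows "Gamma r B b c V x (sqrt (V x) *\<^sub>R e) < 0"
proof -
  have "\<bar>Re (cinner (B x *v e) e)\<bar> \<le> \<Lambda>"
    using abs_Re_le_cmod[of "cinner (B x *v e) e"] bounded \<open>norm e = 1\<close> by (metis mult_1_right order_trans)
  then have "(r - 1) * Re (cinner (B x *v e) e) \<le> \<bar>r - 1\<bar> * \<Lambda>"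
    by (metis abs_ge_self abs_ge_zero abs_mult mult_left_mono order_trans)
  moreover have Gamma_eq: "Gamma r B b c V x (sqrt (V x) *\<^sub>R e)
      = V x * ((r - 1) * Re (cinner (B x *v e) e)) - (\<Lambda> * \<bar>r - 1\<bar> + 2) * V x + V x"
    using Gamma_along_real_vector[of e r b x c, OF assms(1,3) drift] \<open>norm e = 1\<close> \<open>0 < V x\<close>
    by (simp add: mult.assoc) (simp add: algebra_simps)
  moreover note \<open>0 < V x\<close>
  ultimately have "V x * ((r - 1) * Re (cinner (B x *v e) e)) \<le> V x * (\<bar>r - 1\<bar> * \<Lambda>)"
    by (simp add: mult_left_mono)
  then show ?thesis
    using Gamma_eq \<open>0 < V x\<close> by (simp add: algebra_simps)
qed

lemma classS_real_drift:
  assumes "0 < p" and "ellA_s \<Omega> p A" and "L1loc_nonneg \<Omega> V" and "Linf \<Omega> c"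
    and real: "\<And>x. vconj (c x) = c x"
    and "0 < M" and c_sqrt_V: "AE x in lebesgue_on \<Omega>. norm (c x) \<le> M * sqrt (V x)"
  shows "classS \<Omega> p A (\<lambda>x. (1 - p) *\<^sub>R c x) c V"
proof (rule classS_if_drift_cancels[OF assms(2,1) Linf_scaleR[OF \<open>Linf \<Omega> c\<close>] assms(4,3)])
  have "AE x in lebesgue_on \<Omega>. norm ((1 - p) *\<^sub>R c x - c x) \<le> p * M * sqrt (V x)"
    using c_sqrt_V
  proof (rule eventually_mono)
    fix x
    assume "norm (c x) \<le> M * sqrt (V x)"
    moreover have "(1 - p) *\<^sub>R c x - c x = (- p) *\<^sub>R c x"
      by (simp add: algebra_simps)
    ultimately show "norm ((1 - p) *\<^sub>R c x - c x) \<le> p * M * sqrt (V x)"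
      using \<open>0 < p\<close> by (simp add: mult.assoc)
  qed
  then show "\<exists>M'>0. AE x in lebesgue_on \<Omega>. norm ((1 - p) *\<^sub>R c x - c x) \<le> M' * sqrt (V x)"
    using \<open>0 < p\<close> \<open>0 < M\<close> by (intro exI[of _ "p * M"]) simp
  have "(1 - p) *\<^sub>R c x + Jop p (c x) = 0" for x
    using Jop_real[OF real] \<open>0 < p\<close> by (simp add: algebra_simps)
  then show "AE x in lebesgue_on \<Omega>. (1 - p) *\<^sub>R c x + Jop p (c x) = 0"
    by simp
qed

lemma not_classS_if_drift_opposes:
  assumes "vconj e = e" and "norm e = 1" and "r \<noteq> 0"
    and bounded: "AE x in lebesgue_on \<Omega>.
      \<forall>\<xi> \<sigma>. cmod (cinner (B x *v \<xi>) \<sigma>) \<le> \<Lambda> * norm \<xi> * norm \<sigma>"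
    and "\<not> (AE x in lebesgue_on \<Omega>. \<not> P x)"
    and opposing: "\<And>x. P x \<Longrightarrow>
      0 < V x \<and> b x + Jop r (c x) = (- (\<Lambda> * \<bar>r - 1\<bar> + 2) * sqrt (V x)) *\<^sub>R e"
  shows "\<not> classS \<Omega> r B b c V"
proof
  assume "classS \<Omega> r B b c V"
  then have "AE x in lebesgue_on \<Omega>. \<forall>\<xi>. 0 \<le> Gamma r B b c V x \<xi>"
    by (rule classS_Gamma_nonneg)
  then have "AE x in lebesgue_on \<Omega>. \<not> P x"
    using bounded
  proof eventually_elim
    case (elim x)
    show ?case
    proof
      assume "P x"
      then have "Gamma r B b c V x (sqrt (V x) *\<^sub>R e) < 0"
        using elim(2) opposing Gamma_negative_along_real_vector[OF assms(1-3), where \<Lambda> = \<Lambda> and B = B]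
        by blast
      with elim(1) show False
        by (meson not_le)
    qed
  qed
  with \<open>\<not> (AE x in lebesgue_on \<Omega>. \<not> P x)\<close> show False
    by blast
qed

lemma ellA_s_imp_ellA: "ellA_s \<Omega> s A \<Longrightarrow> ellA \<Omega> A"
  by (simp add: ellA_s_def)

lemma ellA_bounded:
  assumes "ellA \<Omega> B"
  obtains \<Lambda> where "\<Lambda> > 0" and "AE x in lebesgue_on \<Omega>.
    \<forall>\<xi> \<sigma>. cmod (cinner (B x *v \<xi>) \<sigma>) \<le> \<Lambda> * norm \<xi> * norm \<sigma>"
proof -
  obtain lam \<Lambda> where "\<Lambda> > 0" and ellipticity: "AE x in lebesgue_on \<Omega>.
      (\<forall>\<xi>. lam * (norm \<xi>)\<^sup>2 \<le> Re (cinner (B x *v \<xi>) \<xi>)) \<and>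
      (\<forall>\<xi> \<sigma>. cmod (cinner (B x *v \<xi>) \<sigma>) \<le> \<Lambda> * norm \<xi> * norm \<sigma>)"
    using assms unfolding ellA_def by blast
  from ellipticity have "AE x in lebesgue_on \<Omega>.
      \<forall>\<xi> \<sigma>. cmod (cinner (B x *v \<xi>) \<sigma>) \<le> \<Lambda> * norm \<xi> * norm \<sigma>"
    by (rule eventually_mono) blast
  with \<open>\<Lambda> > 0\<close> show ?thesis
    using that by blast
qed

lemma exists_drift_separating_classS:
  fixes B :: "real^'n \<Rightarrow> complex^'n^'n" and V :: "real^'n \<Rightarrow> real"
  assumes V: "L1loc_nonneg \<Omega> V" "\<not> (AE x in lebesgue_on \<Omega>. V x = 0)"
    and "0 < p" and "0 < r" and "p \<noteq> r" and "ellA \<Omega> B"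
  shows "\<exists>b c. Linf \<Omega> b \<and> Linf \<Omega> c \<and>
    (\<forall>A. ellA_s \<Omega> p A \<longrightarrow> classS \<Omega> p A b c V) \<and> \<not> classS \<Omega> r B b c V"
proof -
  obtain \<Lambda> where "\<Lambda> > 0" and bounded: "AE x in lebesgue_on \<Omega>.
      \<forall>\<xi> \<sigma>. cmod (cinner (B x *v \<xi>) \<sigma>) \<le> \<Lambda> * norm \<xi> * norm \<sigma>"
    using \<open>ellA \<Omega> B\<close> by (rule ellA_bounded)
  have [measurable]: "V \<in> borel_measurable (lebesgue_on \<Omega>)"
    and V_nonneg: "AE x in lebesgue_on \<Omega>. 0 \<le> V x"
    using V(1) by (simp_all add: L1loc_nonneg_def)
  obtain N :: nat where N: "\<not> (AE x in lebesgue_on \<Omega>. \<not> (0 < V x \<and> V x \<le> real N))"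
    using exists_bounded_level_not_null[OF V_nonneg V(2)] by blast
  fix i :: 'n
  define e :: "complex^'n" where "e = axis i 1"
  define \<kappa> where "\<kappa> = (\<Lambda> * \<bar>r - 1\<bar> + 2) / (p - r)"
  define f where "f x = (if 0 < V x \<and> V x \<le> real N then \<kappa> * sqrt (V x) else 0)" for x
  define c where "c x = f x *\<^sub>R e" for x
  define b where "b x = (1 - p) *\<^sub>R c x" for x
  have e_real: "vconj e = e" and e_unit: "norm e = 1"
    by (simp_all add: e_def)
  have c_real: "vconj (c x) = c x" for x
    using e_real by (simp add: c_def vconj_scaleR)
  have [measurable]: "f \<in> borel_measurable (lebesgue_on \<Omega>)"
    unfolding f_def by measurable
  have "AE x in lebesgue_on \<Omega>. \<bar>f x\<bar> \<le> \<bar>\<kappa>\<bar> * sqrt (real N)"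
    by (simp add: f_def abs_mult mult_left_mono)
  then have "Linf \<Omega> c"
    unfolding c_def by (rule Linf_scaleR_const[rotated]) measurable
  moreover have "AE x in lebesgue_on \<Omega>. norm (c x) \<le> \<bar>\<kappa>\<bar> * sqrt (V x)"
    using V_nonneg by (rule eventually_mono) (simp add: c_def f_def e_unit abs_mult)
  moreover have "0 < \<bar>\<kappa>\<bar>"
    using \<open>\<Lambda> > 0\<close> \<open>p \<noteq> r\<close> by (simp add: \<kappa>_def add_nonneg_pos)
  ultimately have admissible_p: "classS \<Omega> p A b c V" if "ellA_s \<Omega> p A" for A
    using classS_real_drift[where c = c, OF \<open>0 < p\<close> that V(1) _ c_real] unfolding b_def by blast
  have "0 < V x \<and> b x + Jop r (c x) = (- (\<Lambda> * \<bar>r - 1\<bar> + 2) * sqrt (V x)) *\<^sub>R e"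
    if "0 < V x \<and> V x \<le> real N" for x
  proof -
    have "b x + Jop r (c x) = (r - p) *\<^sub>R c x"
      using \<open>0 < r\<close> by (simp add: b_def Jop_real[OF c_real] algebra_simps)
    moreover have "(r - p) * f x = - (\<Lambda> * \<bar>r - 1\<bar> + 2) * sqrt (V x)"
      using that \<open>p \<noteq> r\<close> by (simp add: f_def \<kappa>_def divide_simps) (simp add: algebra_simps)
    ultimately show ?thesis
      using that by (simp add: c_def)
  qed
  then have "\<not> classS \<Omega> r B b c V"
    using \<open>0 < r\<close> by (intro not_classS_if_drift_opposes[OF e_real e_unit _ bounded N]) simp_all
  then show ?thesis
    using Linf_scaleR[OF \<open>Linf \<Omega> c\<close>] \<open>Linf \<Omega> c\<close> admissible_p unfolding b_def by blast
qed

theorem proposition3p3: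
  fixes \<Omega> :: "(real^'n) set" and V :: "real^'n \<Rightarrow> real" and p r :: real
  assumes "open \<Omega>" and "\<Omega> \<noteq> {}"
    and "L1loc_nonneg \<Omega> V" and "\<not> (AE x in lebesgue_on \<Omega>. V x = 0)"
    and "1 < p" and "1 < r" and "p \<noteq> r"
  shows "(\<forall>B. ellA_s \<Omega> r B \<longrightarrow>
            (\<exists>b c. Linf \<Omega> b \<and> Linf \<Omega> c \<and>
               (\<forall>A. ellA_s \<Omega> p A \<longrightarrow> classS \<Omega> p A b c V) \<and>
               \<not> classS \<Omega> r B b c V))
       \<and> (\<forall>A. ellA_s \<Omega> p A \<and> ellA_s \<Omega> r A \<longrightarrow>
            (\<exists>b c. Linf \<Omega> b \<and> Linf \<Omega> c \<and> classS \<Omega> p A b c V \<and> \<not> classS \<Omega> r A b c V))"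
proof -
  have separating: "\<exists>b c. Linf \<Omega> b \<and> Linf \<Omega> c \<and>
      (\<forall>A. ellA_s \<Omega> p A \<longrightarrow> classS \<Omega> p A b c V) \<and> \<not> classS \<Omega> r B b c V"
    if "ellA_s \<Omega> r B" for B
    using exists_drift_separating_classS[OF assms(3,4) _ _ assms(7) ellA_s_imp_ellA[OF that]] assms(5,6)
    by simp
  then show ?thesis
    by blast
qed

end
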